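(* Let $d>k\ge 0$ be integers with $d$ even and $k$ odd. Then $f(k,d)\le \frac{k+1}{d+2}$.
   Context: For a graph $G=(V,E)$ and an integer $k\ge 0$, a $k$-independent set is a set $S\subseteq V$ such that the induced subgraph $G[S]$ has maximum degree at most $k$; $\alpha_k(G)$ denotes the maximum cardinality of a $k$-independent set of $G$. $n(G)$ is the number of vertices and $d(G)=2|E(G)|/n(G)$ the average degree. For integers $d,k\ge 0$, $f(k,d)=\inf\left\{\frac{\alpha_k(G)}{n(G)} : G \text{ a finite simple graph with at least one vertex and } d(G)\le d\right\}$. *)

theory Defs
  imports Main "HOL-Library.Disjoint_Sets" Complex_Main
begin

text \<open>Vertices are taken to be natural numbers; every finite
  simple graph is isomorphic to one of these, and all quantities below are
  isomorphism invariant.\<close>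

definition simple_graph :: "nat set \<Rightarrow> nat set set \<Rightarrow> bool" where
  "simple_graph V E \<longleftrightarrow> finite V \<and> (\<forall>e\<in>E. e \<subseteq> V \<and> card e = 2)"

definition induced_degree :: "nat set set \<Rightarrow> nat set \<Rightarrow> nat \<Rightarrow> nat" where
  "induced_degree E S v = card {u \<in> S. {u, v} \<in> E}"

definition k_independent :: "nat set \<Rightarrow> nat set set \<Rightarrow> nat \<Rightarrow> nat set \<Rightarrow> bool" where
  "k_independent V E k S \<longleftrightarrow> S \<subseteq> V \<and> (\<forall>v\<in>S. induced_degree E S v \<le> k)"

definition alpha_k :: "nat set \<Rightarrow> nat set set \<Rightarrow> nat \<Rightarrow> nat" where
  "alpha_k V E k = Max (card ` {S. k_independent V E k S})"

definition avg_degree :: "nat set \<Rightarrow> nat set set \<Rightarrow> real" where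
  "avg_degree V E = 2 * real (card E) / real (card V)"

definition f_kd :: "nat \<Rightarrow> nat \<Rightarrow> real" where
  "f_kd k d = Inf {real (alpha_k V E k) / real (card V) | V E.
                    simple_graph V E \<and> V \<noteq> {} \<and> avg_degree V E \<le> real d}"

end

theory Submission
  imports Defs
begin

(* The bound is witnessed by the cocktail party graph on 2m = d + 2 vertices: the vertices
   0, ..., 2m - 1 are grouped into m "twin pairs" {2i, 2i+1}, and two distinct vertices are
   adjacent unless they are twins.  Every vertex has degree 2m - 2 = d, so the average degree
   is exactly d.  In an induced subgraph G[S] a vertex v has degree |S| minus the number of
   vertices of its own twin pair in S, hence at least |S| - 2.  Consequently a k-independent
   set S with |S| >= k + 2 has |S| = k + 2 and contains the whole twin pair of each of its
   vertices, so |S| is even; as k is odd this is impossible, and alpha_k(G) <= k + 1.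
   The file first develops the twin pairs, then the graph (well-formedness, edge count,
   adjacency, induced degrees), then the bound on alpha_k, and finally derives the theorem
   from the fact that f(k, d) is bounded above by the ratio alpha_k(G) / n(G) of any
   admissible graph G. *)

definition twin_pair :: "nat \<Rightarrow> nat set" where
  "twin_pair i = {2 * i, 2 * i + 1}"

lemma mem_twin_pair [simp]: "w \<in> twin_pair i \<longleftrightarrow> w div 2 = i"
proof
  assume "w \<in> twin_pair i"
  then show "w div 2 = i" unfolding twin_pair_def by auto
next
  assume "w div 2 = i"
  then have "w = 2 * i \<or> w = 2 * i + 1" by linarith
  then show "w \<in> twin_pair i" unfolding twin_pair_def by simp
qed

lemma card_twin_pair [simp]: "card (twin_pair i) = 2"
  unfolding twin_pair_def by simp

lemma inj_twin_pair: "inj twin_pair"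
proof (rule injI)
  fix i j assume eq: "twin_pair i = twin_pair j"
  have "2 * i \<in> twin_pair i" by simp
  then have "2 * i \<in> twin_pair j" by (simp only: eq)
  then show "i = j" by simp
qed

lemma doubleton_eq_twin_pair: "{u, v} = twin_pair i \<longleftrightarrow> u \<noteq> v \<and> u div 2 = i \<and> v div 2 = i"
proof
  assume eq: "{u, v} = twin_pair i"
  then have "u \<in> twin_pair i" "v \<in> twin_pair i" by blast+
  moreover have "u \<noteq> v"
  proof
    assume "u = v"
    then have "card {u, v} = 1" by simp
    then show False using eq by simp
  qed
  ultimately show "u \<noteq> v \<and> u div 2 = i \<and> v div 2 = i" by simp
next
  assume "u \<noteq> v \<and> u div 2 = i \<and> v div 2 = i"
  then have "{u, v} \<subseteq> twin_pair i" "card {u, v} = card (twin_pair i)" by auto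
  then show "{u, v} = twin_pair i"
    by (intro card_subset_eq) (auto simp: twin_pair_def)
qed

text \<open>A finite set of naturals that contains, with each element, its whole twin pair is a
  disjoint union of twin pairs and therefore has even cardinality.\<close>

lemma even_card_twin_closed:
  assumes "finite S" and closed: "\<And>v. v \<in> S \<Longrightarrow> twin_pair (v div 2) \<subseteq> S"
  shows "even (card S)"
proof -
  define C where "C = twin_pair ` (\<lambda>v. v div 2) ` S"
  have union: "\<Union>C = S"
    using closed unfolding C_def by fastforce
  have "2 * card C = card (\<Union>C)"
  proof (rule card_partition)
    show "finite C" using \<open>finite S\<close> unfolding C_def by simp
    show "finite (\<Union>C)" using union \<open>finite S\<close> by simp
    show "\<And>c. c \<in> C \<Longrightarrow> card c = 2" unfolding C_def by auto
    show "\<And>c1 c2. c1 \<in> C \<Longrightarrow> c2 \<in> C \<Longrightarrow> c1 \<noteq> c2 \<Longrightarrow> c1 \<inter> c2 = {}"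
      unfolding C_def by auto
  qed
  then show ?thesis using union by (metis dvd_triv_left)
qed

definition cocktail_vertices :: "nat \<Rightarrow> nat set" where
  "cocktail_vertices m = {..<2 * m}"

definition cocktail_edges :: "nat \<Rightarrow> nat set set" where
  "cocktail_edges m = {e. e \<subseteq> {..<2 * m} \<and> card e = 2} - twin_pair ` {..<m}"

lemma cocktail_simple_graph: "simple_graph (cocktail_vertices m) (cocktail_edges m)"
  unfolding simple_graph_def cocktail_vertices_def cocktail_edges_def by auto

lemma card_cocktail_vertices: "card (cocktail_vertices m) = 2 * m"
  unfolding cocktail_vertices_def by simp

lemma card_cocktail_edges: "card (cocktail_edges m) = 2 * m * (m - 1)"
proof -
  have pairs_sub: "twin_pair ` {..<m} \<subseteq> {e. e \<subseteq> {..<2 * m} \<and> card e = 2}"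
    by auto
  have "card {e. e \<subseteq> {..<2 * m} \<and> card e = 2} = (2 * m) choose 2"
    using n_subsets[of "{..<2 * m}" 2] by simp
  also have "\<dots> = m * (2 * m - 1)"
    by (simp add: choose_two)
  finally have all: "card {e. e \<subseteq> {..<2 * m} \<and> card e = 2} = m * (2 * m - 1)" .
  have "card (twin_pair ` {..<m}) = m"
    using inj_twin_pair by (simp add: card_image inj_on_subset)
  then have "card (cocktail_edges m) = m * (2 * m - 1) - m"
    unfolding cocktail_edges_def using pairs_sub all
    by (simp add: card_Diff_subset finite_subset)
  also have "\<dots> = 2 * m * (m - 1)"
    by (simp add: algebra_simps diff_mult_distrib2)
  finally show ?thesis .
qed

lemma avg_degree_cocktail:
  assumes "m \<ge> 1"
  shows "avg_degree (cocktail_vertices m) (cocktail_edges m) = 2 * real (m - 1)"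
  using assms unfolding avg_degree_def card_cocktail_vertices card_cocktail_edges by simp

lemma cocktail_adjacent:
  assumes "u < 2 * m" "v < 2 * m"
  shows "{u, v} \<in> cocktail_edges m \<longleftrightarrow> u div 2 \<noteq> v div 2"
proof -
  have "{u, v} \<in> twin_pair ` {..<m} \<longleftrightarrow> u \<noteq> v \<and> u div 2 = v div 2"
    using assms doubleton_eq_twin_pair by fastforce
  then show ?thesis
    unfolding cocktail_edges_def using assms by (auto simp: card_insert_if)
qed

lemma cocktail_induced_degree:
  assumes "S \<subseteq> cocktail_vertices m" "v \<in> S"
  shows "induced_degree (cocktail_edges m) S v = card (S - twin_pair (v div 2))"
proof -
  have "v < 2 * m" and "\<And>u. u \<in> S \<Longrightarrow> u < 2 * m"
    using assms unfolding cocktail_vertices_def by auto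
  then have "{u \<in> S. {u, v} \<in> cocktail_edges m} = S - twin_pair (v div 2)"
    by (auto simp: cocktail_adjacent)
  then show ?thesis unfolding induced_degree_def by simp
qed

lemma cocktail_k_independent_card:
  assumes "odd k" and ind: "k_independent (cocktail_vertices m) (cocktail_edges m) k S"
  shows "card S \<le> k + 1"
proof (rule ccontr)
  assume "\<not> card S \<le> k + 1"
  then have large: "card S \<ge> k + 2" by simp
  have SV: "S \<subseteq> cocktail_vertices m"
    and deg: "\<And>v. v \<in> S \<Longrightarrow> card (S - twin_pair (v div 2)) \<le> k"
    using ind cocktail_induced_degree unfolding k_independent_def by auto
  have "finite S"
    using SV finite_subset unfolding cocktail_vertices_def by blast
  \<comment> \<open>The twin pair of v meets S in at most two and at least card S - k vertices.\<close>
  have pair_in_S: "twin_pair (v div 2) \<subseteq> S" and exact: "card S = k + 2" if "v \<in> S" for v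
  proof -
    let ?B = "twin_pair (v div 2)"
    have "card (S - ?B) = card S - card (S \<inter> ?B)"
      using \<open>finite S\<close> by (simp add: card_Diff_subset_Int)
    moreover have "card (S \<inter> ?B) \<le> 2"
      using card_mono[of ?B "S \<inter> ?B"] by (simp add: twin_pair_def)
    ultimately have "card (S \<inter> ?B) = 2" and "card S = k + 2"
      using deg[OF that] large by linarith+
    then have "S \<inter> ?B = ?B"
      by (intro card_subset_eq) (auto simp: twin_pair_def)
    then show "?B \<subseteq> S" by blast
    show "card S = k + 2" by fact
  qed
  have "even (card S)"
    using even_card_twin_closed[OF \<open>finite S\<close> pair_in_S] .
  moreover obtain v where "v \<in> S" using large by fastforce
  ultimately show False using exact \<open>odd k\<close> by simp
qed

lemma alpha_k_cocktail:
  assumes "odd k"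
  shows "alpha_k (cocktail_vertices m) (cocktail_edges m) k \<le> k + 1"
proof -
  let ?I = "{S. k_independent (cocktail_vertices m) (cocktail_edges m) k S}"
  have "finite ?I"
    unfolding k_independent_def cocktail_vertices_def
    by (rule finite_subset[of _ "Pow {..<2 * m}"]) auto
  moreover have "{} \<in> ?I" unfolding k_independent_def by simp
  ultimately show ?thesis
    unfolding alpha_k_def using cocktail_k_independent_card[OF assms] by (subst Max_le_iff) auto
qed

lemma f_kd_le_ratio:
  assumes "simple_graph V E" "V \<noteq> {}" "avg_degree V E \<le> real d"
  shows "f_kd k d \<le> real (alpha_k V E k) / real (card V)"
  unfolding f_kd_def
proof (rule cInf_lower)
  show "real (alpha_k V E k) / real (card V) \<in> {real (alpha_k V E k) / real (card V) | V E.
          simple_graph V E \<and> V \<noteq> {} \<and> avg_degree V E \<le> real d}"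
    using assms by blast
  show "bdd_below {real (alpha_k V E k) / real (card V) | V E.
          simple_graph V E \<and> V \<noteq> {} \<and> avg_degree V E \<le> real d}"
    by (rule bdd_belowI[of _ 0]) auto
qed

theorem mainTheorem9:
  fixes k d :: nat
  assumes "d > k" and "even d" and "odd k"
  shows "f_kd k d \<le> real (k + 1) / real (d + 2)"
proof -
  define m where "m = d div 2 + 1"
  have size: "2 * m = d + 2" and "m \<ge> 1"
    using \<open>even d\<close> unfolding m_def by auto
  let ?V = "cocktail_vertices m" and ?E = "cocktail_edges m"
  have "avg_degree ?V ?E = real d"
    using avg_degree_cocktail[OF \<open>m \<ge> 1\<close>] size by simp
  moreover have "?V \<noteq> {}"
    using card_cocktail_vertices[of m] size by auto
  ultimately have "f_kd k d \<le> real (alpha_k ?V ?E k) / real (card ?V)"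
    using f_kd_le_ratio cocktail_simple_graph by simp
  also have "\<dots> = real (alpha_k ?V ?E k) / real (d + 2)"
    using card_cocktail_vertices[of m] size by simp
  also have "\<dots> \<le> real (k + 1) / real (d + 2)"
    using alpha_k_cocktail[OF \<open>odd k\<close>, of m] by (intro divide_right_mono) simp_all
  finally show ?thesis .
qed

end
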